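(* There exists $\varphi_1>\frac{\pi}{2}$ such that for every $s\in\mathbb C$ with $\frac{\pi}{2}<|\arg s|<\varphi_1$ there exists $\sigma>0$ with $s\in\Omega_\sigma$ and $\sigma<(\Re\sqrt s)^2$.
   Context: $\sqrt z$ denotes the branch with $\Re\sqrt z>0$ for $|\arg z|<\pi$. For $\sigma>0$: $\Omega^1_\sigma=\{s:\Re s\le0,\ \sigma<|\Im s|\}\cup\{s:\Re s>0,\ \sigma<|s|\}$; $\Omega^2_\sigma=\{s:\ \sigma<|s|+\Re s,\ \sigma>\frac{-\Re(s)|s|}{2(|s|+\Re s)}\}$; $\Omega^3_\sigma=\{s\neq0:\ \sigma(|s|-\sigma+\Re s)-(\sigma(1+\frac{\Re s}{|s|})+\frac12\Re s)^2>0\}$; $\Omega_\sigma=\Omega^1_\sigma\cap(\Omega^2_\sigma\cup\Omega^3_\sigma)$. *)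

theory Defs
  imports "HOL-Analysis.Analysis"
begin

definition Omega1 :: "real \<Rightarrow> complex set" where
  "Omega1 \<sigma> = {s. Re s \<le> 0 \<and> \<sigma> < \<bar>Im s\<bar>} \<union> {s. Re s > 0 \<and> \<sigma> < cmod s}"

definition Omega2 :: "real \<Rightarrow> complex set" where
  "Omega2 \<sigma> = {s. \<sigma> < cmod s + Re s \<and> \<sigma> > - Re s * cmod s / (2 * (cmod s + Re s))}"

definition Omega3 :: "real \<Rightarrow> complex set" where
  "Omega3 \<sigma> = {s. s \<noteq> 0 \<and>
     \<sigma> * (cmod s - \<sigma> + Re s) - (\<sigma> * (1 + Re s / cmod s) + Re s / 2)^2 > 0}"

definition Omega :: "real \<Rightarrow> complex set" where
  "Omega \<sigma> = Omega1 \<sigma> \<inter> (Omega2 \<sigma> \<union> Omega3 \<sigma>)"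

end

theory Submission
  imports Defs
begin

text \<open>For \<open>s = x + iy\<close> with \<open>x < 0\<close> and \<open>r = |s|\<close>, membership in \<open>\<Omega>\<^sub>\<sigma>\<close> only asks \<open>\<sigma>\<close> to lie
  between \<open>-xr/(2(r+x))\<close> and \<open>(r+x)/2 = (Re \<surd>s)\<^sup>2\<close>; the remaining conditions follow because
  \<open>r + x \<le> |y|\<close>. This window is nonempty iff \<open>(r+x)\<^sup>2 + xr = r(r+3x) + x\<^sup>2 > 0\<close>, which holds as soon
  as \<open>cos (arg s) = x/r > -1/3\<close>. Hence \<open>\<phi>\<^sub>1 = arccos (-1/3)\<close> works, with \<open>\<sigma>\<close> the midpoint.\<close>

lemma Re_csqrt_power2: "(Re (csqrt s))\<^sup>2 = (cmod s + Re s) / 2"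
  using abs_Re_le_cmod[of s] by simp

lemma cmod_plus_Re_le_abs_Im:
  assumes "Re s \<le> 0"
  shows "cmod s + Re s \<le> \<bar>Im s\<bar>"
proof -
  have "(cmod s + Re s)\<^sup>2 = (Im s)\<^sup>2 + 2 * Re s * (cmod s + Re s)"
    using cmod_power2[of s] by (simp add: power2_eq_square algebra_simps)
  also have "\<dots> \<le> (Im s)\<^sup>2"
    using assms abs_Re_le_cmod[of s] by (simp add: mult_nonpos_nonneg)
  finally show ?thesis
    using abs_le_square_iff[of "cmod s + Re s" "Im s"] by linarith
qed

lemma in_Omega_if_Re_nonpos:
  assumes "Re s \<le> 0" and "0 < \<sigma>"
    and "- Re s * cmod s / (2 * (cmod s + Re s)) < \<sigma>" and "\<sigma> < (cmod s + Re s) / 2"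
  shows "s \<in> Omega \<sigma>"
proof -
  have "\<sigma> < cmod s + Re s"
    using assms(2,4) by (simp add: field_simps)
  moreover have "\<sigma> < \<bar>Im s\<bar>"
    using \<open>\<sigma> < cmod s + Re s\<close> cmod_plus_Re_le_abs_Im[OF assms(1)] by linarith
  ultimately show ?thesis
    using assms(1,3) unfolding Omega_def Omega1_def Omega2_def by auto
qed

lemma Omega2_threshold_pos_lt_half:
  fixes r x :: real
  assumes "x < 0" and "0 < r + 3 * x"
  shows "0 < - x * r / (2 * (r + x))" and "- x * r / (2 * (r + x)) < (r + x) / 2"
proof -
  have "0 < r" "0 < r + x"
    using assms by linarith+
  moreover have "0 < - x * r"
    using \<open>0 < r\<close> assms(1) by (simp add: mult_neg_pos)
  ultimately show "0 < - x * r / (2 * (r + x))"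
    by (intro divide_pos_pos) simp_all
  have "(r + x) * (r + x) + x * r = r * (r + 3 * x) + x * x"
    by (simp add: algebra_simps)
  moreover have "0 < r * (r + 3 * x)"
    using \<open>0 < r\<close> assms(2) by simp
  moreover have "0 \<le> x * x"
    by simp
  ultimately have "- x * r < (r + x) * (r + x)"
    by linarith
  then show "- x * r / (2 * (r + x)) < (r + x) / 2"
    using \<open>0 < r + x\<close> by (simp add: field_simps)
qed

lemma Re_bounds_if_Arg_in_sector:
  assumes "pi / 2 < \<bar>Arg s\<bar>" and "\<bar>Arg s\<bar> < arccos (- 1 / 3)"
  shows "Re s < 0" and "0 < cmod s + 3 * Re s"
proof -
  have "s \<noteq> 0"
    using assms(1) by (auto simp: Arg_zero)
  then have cos_Arg: "cos \<bar>Arg s\<bar> = Re s / cmod s" and "0 < cmod s"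
    using cos_Arg[of s] by (simp_all add: abs_if)
  have "\<bar>Arg s\<bar> < 3 * pi / 2"
    using Arg_bounded[of s] pi_gt_zero by linarith
  then have "cos \<bar>Arg s\<bar> < 0"
    using cos_lt_zero_pi assms(1) by blast
  then show "Re s < 0"
    using cos_Arg \<open>0 < cmod s\<close> by (simp add: divide_less_0_iff)
  have "cos (arccos (- 1 / 3)) < cos \<bar>Arg s\<bar>"
    using cos_monotone_0_pi[of "\<bar>Arg s\<bar>" "arccos (- 1 / 3)"] assms(2) arccos_ubound[of "- 1 / 3"]
    by simp
  then show "0 < cmod s + 3 * Re s"
    using cos_Arg \<open>0 < cmod s\<close> by (simp add: field_simps)
qed

theorem mainTheorem19:
  shows "\<exists>\<phi>1 > pi / 2. \<forall>s :: complex. pi / 2 < \<bar>Arg s\<bar> \<and> \<bar>Arg s\<bar> < \<phi>1 \<longrightarrow>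
           (\<exists>\<sigma> > 0. s \<in> Omega \<sigma> \<and> \<sigma> < (Re (csqrt s))^2)"
proof (rule exI[of _ "arccos (- 1 / 3)"], intro conjI allI impI)
  show "pi / 2 < arccos (- 1 / 3)"
    using arccos_less_arccos[of "- 1 / 3" 0] by simp
  fix s :: complex
  assume "pi / 2 < \<bar>Arg s\<bar> \<and> \<bar>Arg s\<bar> < arccos (- 1 / 3)"
  then have "Re s < 0" "0 < cmod s + 3 * Re s"
    using Re_bounds_if_Arg_in_sector by auto
  define L where "L = - Re s * cmod s / (2 * (cmod s + Re s))"
  define \<sigma> where "\<sigma> = (L + (cmod s + Re s) / 2) / 2"
  have "0 < L" "L < (cmod s + Re s) / 2"
    using Omega2_threshold_pos_lt_half[OF \<open>Re s < 0\<close>] \<open>0 < cmod s + 3 * Re s\<close> by (simp_all add: L_def)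
  then have "0 < \<sigma>" "L < \<sigma>" "\<sigma> < (cmod s + Re s) / 2"
    by (auto simp: \<sigma>_def field_simps)
  then have "s \<in> Omega \<sigma>"
    using in_Omega_if_Re_nonpos[of s \<sigma>] \<open>Re s < 0\<close> by (simp add: L_def)
  then show "\<exists>\<sigma> > 0. s \<in> Omega \<sigma> \<and> \<sigma> < (Re (csqrt s))^2"
    using \<open>0 < \<sigma>\<close> \<open>\<sigma> < (cmod s + Re s) / 2\<close> by (auto simp: Re_csqrt_power2)
qed

end
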